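(* Assume $\max_{e\in\mathcal{E}_h^B}h_e^{-1}\delta_e\le c_\delta<1$ with $c_\delta$ sufficiently small. Then there is a constant $C$ independent of $h$ such that for all $\mathbf{v}\in\mathbf{V}_h$, \[ \sum_{e\in\mathcal{E}_h^B}h_e^{-1}\|S_h\mathbf{v}-\mathbf{v}\|_{L^2(e)}^2\le C c_\delta\|\nabla\mathbf{v}\|_{L^2(\Omega_h)}^2,\qquad \sum_{e\in\mathcal{E}_h^B}h_e^{-1}\|S_h\mathbf{v}\|_{L^2(e)}^2\le C\|\mathbf{v}\|_{1,h}^2 . \] In particular, the norms $\|\cdot\|_h$, $\|\cdot\|_{1,h}$ and $|||\cdot|||_h$ are equivalent on $\mathbf{V}_h$ with equivalence constants independent of $h$.
   Context: $\Omega\subset\mathbb{R}^2$ is a bounded domain with smooth boundary. $S\supset\Omega$ is a polygon and $\mathcal{S}_h$ is a quasi-uniform, shape-regular triangulation of $S$ with mesh size $h$. Set $\mathcal{T}_h=\{T\in\mathcal{S}_h:\bar T\subset\bar\Omega\}$, $\Omega_h=\operatorname{int}(\bigcup_{T\in\mathcal{T}_h}\bar T)$, and let $\mathcal{T}_h^{ct}$ be the Clough–Tocher refinement of $\mathcal{T}_h$ (each triangle split into three by joining its vertices to its barycenter). $\mathcal{E}_h^B$ is the set of boundary edges (on $\partial\Omega_h$), $\mathbf{n}_h$ the outward unit normal of $\partial\Omega_h$, $h_e=\operatorname{diam}(e)$. A map $M:\partial\Omega_h\to\partial\Omega$ is given; $\mathfrak{d}(x)=M(x)-x$, $\delta(x)=|\mathfrak{d}(x)|$,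 $\mathbf{d}=\mathfrak{d}/\delta$, $\delta_e=\max_{x\in\bar e}\delta(x)$, and for piecewise smooth $\mathbf{v}$, $(S_h\mathbf{v})(x)=\mathbf{v}(x)+\delta(x)\frac{\partial\mathbf{v}}{\partial\mathbf{d}}(x)+\frac12\delta(x)^2\frac{\partial^2\mathbf{v}}{\partial\mathbf{d}^2}(x)$ for $x\in\partial\Omega_h$ (derivatives from the adjacent element). $\mathbf{V}_h=\{\mathbf{v}\in\mathbf{H}^1(\Omega_h):\mathbf{v}|_K\in\mathcal{P}_2(K)^2\ \forall K\in\mathcal{T}_h^{ct},\ \int_{\partial\Omega_h}\mathbf{v}\cdot\mathbf{n}_h\,ds=0\}$. Norms: $\|\mathbf{v}\|_h^2=\|\nabla\mathbf{v}\|_{L^2(\Omega_h)}^2+\sum_{e}h_e^{-1}\|S_h\mathbf{v}\|_{L^2(e)}^2$; $\|\mathbf{v}\|_{1,h}^2=\|\nabla\mathbf{v}\|_{L^2(\Omega_h)}^2+\sum_e h_e^{-1}\|\mathbf{v}\|_{L^2(e)}^2$; $|||\mathbf{v}|||_h^2=\|\mathbf{v}\|_h^2+\sum_e h_e\|\nabla\mathbf{v}\|_{L^2(e)}^2$ (sums over $e\in\mathcal{E}_h^B$). *)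

theory Defs
  imports "HOL-Analysis.Analysis"
begin

type_synonym pt = "real^2"

definition smooth_fun :: "(real \<Rightarrow> real) \<Rightarrow> bool" where
  "smooth_fun f \<longleftrightarrow> (\<forall>k x. ((deriv ^^ k) f) differentiable (at x))"

definition smooth_bounded_domain :: "pt set \<Rightarrow> bool" where
  "smooth_bounded_domain \<Omega> \<longleftrightarrow> open \<Omega> \<and> connected \<Omega> \<and> bounded \<Omega> \<and> \<Omega> \<noteq> {} \<and>
     (\<forall>p\<in>frontier \<Omega>. \<exists>U (R::pt \<Rightarrow> pt) f. open U \<and> p \<in> U \<and> orthogonal_transformation R \<and> smooth_fun f \<and>
        \<Omega> \<inter> U = {x\<in>U. (R (x - p))$2 < f ((R (x - p))$1)})"

definition is_triangle :: "pt set \<Rightarrow> bool" where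
  "is_triangle T \<longleftrightarrow> (\<exists>a b c. \<not> collinear {a, b, c} \<and> T = convex hull {a, b, c})"

definition vertices :: "pt set \<Rightarrow> pt set" where
  "vertices T = {x. x extreme_point_of T}"

definition edges :: "pt set \<Rightarrow> pt set set" where
  "edges T = {closed_segment a b | a b. a \<in> vertices T \<and> b \<in> vertices T \<and> a \<noteq> b}"

definition barycenter :: "pt set \<Rightarrow> pt" where
  "barycenter T = (1/3) *\<^sub>R (\<Sum>a\<in>vertices T. a)"

definition triangulation :: "pt set set \<Rightarrow> pt set \<Rightarrow> bool" where
  "triangulation \<S> S \<longleftrightarrow> finite \<S> \<and> (\<forall>T\<in>\<S>. is_triangle T) \<and> \<Union>\<S> = S \<and>
     (\<forall>T\<in>\<S>. \<forall>T'\<in>\<S>. T \<inter> T' face_of T \<and> T \<inter> T' face_of T')"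

definition shape_reg_quasi_unif :: "real \<Rightarrow> real \<Rightarrow> pt set set \<Rightarrow> bool" where
  "shape_reg_quasi_unif \<kappa> h \<S> \<longleftrightarrow> (\<exists>T\<in>\<S>. diameter T = h) \<and>
     (\<forall>T\<in>\<S>. diameter T \<le> h \<and> h \<le> \<kappa> * diameter T \<and> (\<exists>x. ball x (diameter T / \<kappa>) \<subseteq> T))"

definition interior_mesh :: "pt set set \<Rightarrow> pt set \<Rightarrow> pt set set" where
  "interior_mesh \<S> \<Omega> = {T\<in>\<S>. closure T \<subseteq> closure \<Omega>}"

definition mesh_domain :: "pt set set \<Rightarrow> pt set" where
  "mesh_domain \<T> = interior (\<Union>T\<in>\<T>. closure T)"

definition bdry_edges :: "pt set set \<Rightarrow> pt set set" where
  "bdry_edges \<T> = {e. \<exists>T\<in>\<T>. e \<in> edges T \<and> e \<subseteq> frontier (mesh_domain \<T>)}"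

definition ct_split :: "pt set \<Rightarrow> pt set set" where
  "ct_split T = {convex hull (insert (barycenter T) e) | e. e \<in> edges T}"

definition ct_mesh :: "pt set set \<Rightarrow> pt set set" where
  "ct_mesh \<T> = (\<Union>T\<in>\<T>. ct_split T)"

definition elem_of_edge :: "pt set set \<Rightarrow> pt set \<Rightarrow> pt set" where
  "elem_of_edge \<T> e = (SOME T. T \<in> \<T> \<and> e \<in> edges T)"

definition adj_elem :: "pt set set \<Rightarrow> pt set \<Rightarrow> pt set" where
  "adj_elem \<T> e = convex hull (insert (barycenter (elem_of_edge \<T> e)) e)"

definition outward_normal :: "pt set set \<Rightarrow> pt set \<Rightarrow> pt" where
  "outward_normal \<T> e = (SOME n. norm n = 1 \<and> (\<forall>x\<in>e. \<forall>y\<in>e. n \<bullet> (x - y) = 0) \<and>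
      (\<forall>c\<in>vertices (elem_of_edge \<T> e) - e. \<forall>y\<in>e. 0 < n \<bullet> (y - c)))"

text \<open>Arc-length integral over a straight segment e (independent of orientation).\<close>
definition edge_integral :: "pt set \<Rightarrow> (pt \<Rightarrow> real) \<Rightarrow> real" where
  "edge_integral e f = (SOME I. \<forall>a b. e = closed_segment a b \<and> a \<noteq> b \<longrightarrow>
       I = dist a b * integral {0..1} (\<lambda>t. f (a + t *\<^sub>R (b - a))))"

definition edge_L2sq :: "pt set \<Rightarrow> (pt \<Rightarrow> pt) \<Rightarrow> real" where
  "edge_L2sq e w = edge_integral e (\<lambda>x. (norm (w x))\<^sup>2)"

definition P2 :: "(pt \<Rightarrow> pt) set" where
  "P2 = {p. \<exists>c0 c1 c2 c3 c4 c5. \<forall>x. p x = c0 + (x$1) *\<^sub>R c1 + (x$2) *\<^sub>R c2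
        + ((x$1)\<^sup>2) *\<^sub>R c3 + (x$1 * x$2) *\<^sub>R c4 + ((x$2)\<^sup>2) *\<^sub>R c5}"

definition piece :: "(pt \<Rightarrow> pt) \<Rightarrow> pt set \<Rightarrow> (pt \<Rightarrow> pt)" where
  "piece v K = (SOME p. p \<in> P2 \<and> (\<forall>x\<in>K. v x = p x))"

text \<open>Continuous (hence H1-conforming) piecewise quadratics on the Clough-Tocher refinement
  with vanishing boundary flux.\<close>
definition Vh :: "pt set set \<Rightarrow> (pt \<Rightarrow> pt) set" where
  "Vh \<T> = {v. (\<forall>K\<in>ct_mesh \<T>. \<exists>p\<in>P2. \<forall>x\<in>K. v x = p x) \<and>
        (\<Sum>e\<in>bdry_edges \<T>. edge_integral e (\<lambda>x. v x \<bullet> outward_normal \<T> e)) = 0}"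

definition dirder :: "(pt \<Rightarrow> pt) \<Rightarrow> pt \<Rightarrow> pt \<Rightarrow> pt" where
  "dirder p d x = vector_derivative (\<lambda>t. p (x + t *\<^sub>R d)) (at 0)"

definition Sh :: "(pt \<Rightarrow> pt) \<Rightarrow> pt set set \<Rightarrow> (pt \<Rightarrow> pt) \<Rightarrow> pt set \<Rightarrow> pt \<Rightarrow> pt" where
  "Sh M \<T> v e x = (let p = piece v (adj_elem \<T> e); \<delta> = norm (M x - x); d = (M x - x) /\<^sub>R \<delta>
      in v x + \<delta> *\<^sub>R dirder p d x + (\<delta>\<^sup>2 / 2) *\<^sub>R dirder (dirder p d) d x)"

definition grad_sq :: "(pt \<Rightarrow> pt) \<Rightarrow> pt \<Rightarrow> real" where
  "grad_sq w x = (\<Sum>j\<in>Basis. (norm (frechet_derivative w (at x) j))\<^sup>2)"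

definition grad_L2sq :: "pt set set \<Rightarrow> (pt \<Rightarrow> pt) \<Rightarrow> real" where
  "grad_L2sq \<T> v = integral (mesh_domain \<T>) (grad_sq v)"

definition norm_h_sq :: "(pt \<Rightarrow> pt) \<Rightarrow> pt set set \<Rightarrow> (pt \<Rightarrow> pt) \<Rightarrow> real" where
  "norm_h_sq M \<T> v = grad_L2sq \<T> v + (\<Sum>e\<in>bdry_edges \<T>. edge_L2sq e (Sh M \<T> v e) / diameter e)"

definition norm_1h_sq :: "pt set set \<Rightarrow> (pt \<Rightarrow> pt) \<Rightarrow> real" where
  "norm_1h_sq \<T> v = grad_L2sq \<T> v + (\<Sum>e\<in>bdry_edges \<T>. edge_L2sq e v / diameter e)"

text \<open>On a boundary edge the gradient is the trace from the adjacent element.\<close>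
definition triple_sq :: "(pt \<Rightarrow> pt) \<Rightarrow> pt set set \<Rightarrow> (pt \<Rightarrow> pt) \<Rightarrow> real" where
  "triple_sq M \<T> v = norm_h_sq M \<T> v +
     (\<Sum>e\<in>bdry_edges \<T>. diameter e * edge_integral e (grad_sq (piece v (adj_elem \<T> e))))"

end

theory Submission
  imports Defs
begin

(* On a boundary edge e let T be its element and K the adjacent Clough-Tocher subtriangle,
   on which v is a quadratic p with affine gradient. Let g be the maximum of |grad p| on K and
   r ~ diam T / kappa the radius of a ball inside K. Then |D_d p| <= g on K and |D_dd p| <= g / r
   for unit d, while |grad p| >= g/2 on a ball of radius r/4 near the maximiser, so that
   (diam T)^2 g^2 <= C(kappa) |v|^2_{H1(T)}: an inverse estimate. Since S_h v - v is the Taylor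
   remainder delta D_d p + delta^2/2 D_dd p with delta <= c_delta h_e, it is pointwise of size
   c_delta (diam T) g on e, hence h_e^-1 |S_h v - v|^2_{L2(e)} <= C c_delta |v|^2_{H1(T)}; the same
   bound controls h_e |grad v|^2_{L2(e)}. Summing over the boundary edges, each element being counted
   at most three times, gives the first estimate, and the norm equivalences follow from it with
   (a + b)^2 <= 2 a^2 + 2 b^2. *)

section \<open>Quadratic vector fields\<close>

definition quad :: "pt \<Rightarrow> pt \<Rightarrow> pt \<Rightarrow> pt \<Rightarrow> pt \<Rightarrow> pt \<Rightarrow> pt \<Rightarrow> pt" where
  "quad c0 c1 c2 c3 c4 c5 x = c0 + (x$1) *\<^sub>R c1 + (x$2) *\<^sub>R c2
        + ((x$1)\<^sup>2) *\<^sub>R c3 + (x$1 * x$2) *\<^sub>R c4 + ((x$2)\<^sup>2) *\<^sub>R c5"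

definition quad_grad :: "pt \<Rightarrow> pt \<Rightarrow> pt \<Rightarrow> pt \<Rightarrow> pt \<Rightarrow> pt \<Rightarrow> pt \<times> pt" where
  "quad_grad c1 c2 c3 c4 c5 x = (c1 + (2 * x$1) *\<^sub>R c3 + (x$2) *\<^sub>R c4, c2 + (x$1) *\<^sub>R c4 + (2 * x$2) *\<^sub>R c5)"

lemma P2_imp_quad: "p \<in> P2 \<Longrightarrow> \<exists>c0 c1 c2 c3 c4 c5. p = quad c0 c1 c2 c3 c4 c5"
  unfolding P2_def quad_def by fast

lemma norm_pt_sq: "(norm (d::pt))\<^sup>2 = (d$1)\<^sup>2 + (d$2)\<^sup>2"
  unfolding power2_norm_eq_inner inner_vec_def sum_2 by (simp add: power2_eq_square)

lemma norm_combination_le: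
  fixes A B :: pt
  shows "norm (d$1 *\<^sub>R A + d$2 *\<^sub>R B) \<le> norm (d::pt) * norm (A, B)"
proof -
  have tri: "norm (d$1 *\<^sub>R A + d$2 *\<^sub>R B) \<le> \<bar>d$1\<bar> * norm A + \<bar>d$2\<bar> * norm B"
    by (rule order_trans[OF norm_triangle_ineq]) simp
  have "(\<bar>d$1\<bar> * norm A + \<bar>d$2\<bar> * norm B)\<^sup>2 \<le> ((d$1)\<^sup>2 + (d$2)\<^sup>2) * ((norm A)\<^sup>2 + (norm B)\<^sup>2)"
  proof -
    have "0 \<le> (\<bar>d$1\<bar> * norm B - \<bar>d$2\<bar> * norm A)\<^sup>2" by simp
    then show ?thesis by (simp add: power2_eq_square algebra_simps)
  qed
  also have "\<dots> = (norm d * norm (A, B))\<^sup>2"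
    by (simp add: norm_pt_sq norm_prod_def power_mult_distrib)
  finally have "\<bar>d$1\<bar> * norm A + \<bar>d$2\<bar> * norm B \<le> norm d * norm (A, B)"
    by (rule power2_le_imp_le) simp
  with tri show ?thesis by linarith
qed

lemma has_derivative_quad:
  "(quad c0 c1 c2 c3 c4 c5 has_derivative
     (\<lambda>h. h$1 *\<^sub>R fst (quad_grad c1 c2 c3 c4 c5 x) + h$2 *\<^sub>R snd (quad_grad c1 c2 c3 c4 c5 x))) (at x)"
proof -
  have nth: "((\<lambda>x. x $ i) has_derivative (\<lambda>x. x $ i)) (at y)" for i and y :: pt
    using bounded_linear_vec_nth by (rule bounded_linear_imp_has_derivative)
  show ?thesis unfolding quad_def quad_grad_def
    by (rule derivative_eq_intros refl nth)+ (simp add: algebra_simps power2_eq_square)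
qed

lemma grad_sq_quad: "grad_sq (quad c0 c1 c2 c3 c4 c5) x = (norm (quad_grad c1 c2 c3 c4 c5 x))\<^sup>2"
proof -
  have Basis: "(Basis :: pt set) = {axis 1 1, axis 2 1}"
    unfolding Basis_vec_def Basis_real_def UNIV_2 by (simp add: insert_commute)
  have "axis 1 (1::real) \<noteq> (axis 2 1 :: pt)"
    by (simp add: axis_eq_axis)
  then show ?thesis
    unfolding grad_sq_def frechet_derivative_at[OF has_derivative_quad, symmetric] Basis
    by (simp add: axis_def norm_prod_def)
qed

lemma dirder_quad:
  "dirder (quad c0 c1 c2 c3 c4 c5) d x
     = d$1 *\<^sub>R fst (quad_grad c1 c2 c3 c4 c5 x) + d$2 *\<^sub>R snd (quad_grad c1 c2 c3 c4 c5 x)"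
proof -
  let ?L = "\<lambda>h::pt. h$1 *\<^sub>R fst (quad_grad c1 c2 c3 c4 c5 x) + h$2 *\<^sub>R snd (quad_grad c1 c2 c3 c4 c5 x)"
  have line: "((\<lambda>t::real. x + t *\<^sub>R d) has_derivative (\<lambda>t. t *\<^sub>R d)) (at 0)"
    by (rule derivative_eq_intros refl)+ simp
  have "((\<lambda>t. quad c0 c1 c2 c3 c4 c5 (x + t *\<^sub>R d)) has_derivative (\<lambda>t. ?L (t *\<^sub>R d))) (at 0)"
    using has_derivative_compose[OF line has_derivative_quad[where x = "x + 0 *\<^sub>R d"]]
    by (simp add: o_def)
  moreover have "(\<lambda>t. ?L (t *\<^sub>R d)) = (\<lambda>t. t *\<^sub>R ?L d)"
    by (simp add: scaleR_add_right)
  ultimately have "((\<lambda>t. quad c0 c1 c2 c3 c4 c5 (x + t *\<^sub>R d)) has_vector_derivative ?L d) (at 0)"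
    by (simp add: has_vector_derivative_def)
  then show ?thesis unfolding dirder_def by (rule vector_derivative_at)
qed

lemma dirder_quad_eq_quad:
  "dirder (quad c0 c1 c2 c3 c4 c5) d =
     quad (d$1 *\<^sub>R c1 + d$2 *\<^sub>R c2) ((2 * d$1) *\<^sub>R c3 + d$2 *\<^sub>R c4) (d$1 *\<^sub>R c4 + (2 * d$2) *\<^sub>R c5) 0 0 0"
  by (rule ext) (simp add: dirder_quad quad_grad_def quad_def scaleR_add_right scaleR_add_left mult_ac)

lemma dirder2_quad:
  "dirder (dirder (quad c0 c1 c2 c3 c4 c5) d) d x =
     d$1 *\<^sub>R ((2 * d$1) *\<^sub>R c3 + d$2 *\<^sub>R c4) + d$2 *\<^sub>R (d$1 *\<^sub>R c4 + (2 * d$2) *\<^sub>R c5)"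
  unfolding dirder_quad_eq_quad dirder_quad by (simp add: quad_grad_def quad_def)

lemma dirder_quad_scaleR:
  "dirder (quad c0 c1 c2 c3 c4 c5) (s *\<^sub>R d) x = s *\<^sub>R dirder (quad c0 c1 c2 c3 c4 c5) d x"
  unfolding dirder_quad by (simp add: algebra_simps)

lemma dirder2_quad_scaleR:
  "dirder (dirder (quad c0 c1 c2 c3 c4 c5) (s *\<^sub>R d)) (s *\<^sub>R d) x
     = s\<^sup>2 *\<^sub>R dirder (dirder (quad c0 c1 c2 c3 c4 c5) d) d x"
  unfolding dirder2_quad by (simp add: algebra_simps power2_eq_square)

lemma dirder_quad_diff:
  "dirder (quad c0 c1 c2 c3 c4 c5) d (x + s *\<^sub>R d) - dirder (quad c0 c1 c2 c3 c4 c5) d x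
     = s *\<^sub>R dirder (dirder (quad c0 c1 c2 c3 c4 c5) d) d y"
  unfolding dirder2_quad dirder_quad quad_grad_def by (simp add: algebra_simps)

lemma norm_dirder_quad_le:
  "norm (dirder (quad c0 c1 c2 c3 c4 c5) d x) \<le> norm d * norm (quad_grad c1 c2 c3 c4 c5 x)"
  using norm_combination_le[of d "fst (quad_grad c1 c2 c3 c4 c5 x)" "snd (quad_grad c1 c2 c3 c4 c5 x)"]
  by (simp add: dirder_quad)

lemma quad_grad_affine:
  "quad_grad c1 c2 c3 c4 c5 (a + t *\<^sub>R (b - a))
     = quad_grad c1 c2 c3 c4 c5 a + t *\<^sub>R (quad_grad c1 c2 c3 c4 c5 b - quad_grad c1 c2 c3 c4 c5 a)"
  unfolding quad_grad_def by (simp add: algebra_simps)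

lemma continuous_on_quad: "continuous_on S (quad c0 c1 c2 c3 c4 c5)"
  unfolding quad_def by (intro continuous_intros)

lemma continuous_on_quad_grad: "continuous_on S (quad_grad c1 c2 c3 c4 c5)"
  unfolding quad_grad_def by (intro continuous_intros)

lemma grad_sq_nonneg: "0 \<le> grad_sq v x"
  unfolding grad_sq_def by (simp add: sum_nonneg)

lemma grad_sq_eq_on_interior:
  assumes "\<forall>y\<in>K. v y = p y" "x \<in> interior K" "p differentiable (at x)"
  shows "grad_sq v x = grad_sq p x"
proof -
  have "(p has_derivative frechet_derivative p (at x)) (at x)"
    using assms(3) by (rule frechet_derivative_works[THEN iffD1])
  then have "(v has_derivative frechet_derivative p (at x)) (at x)"
    by (rule has_derivative_transform_within_open[OF _ open_interior assms(2)])
       (metis assms(1) interior_subset subsetD)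
  then show ?thesis
    unfolding grad_sq_def by (simp add: frechet_derivative_at[symmetric])
qed

lemma grad_sq_quad_piece_absolutely_integrable:
  assumes "convex K" "compact K" "\<forall>x\<in>K. v x = quad c0 c1 c2 c3 c4 c5 x"
  shows "grad_sq v absolutely_integrable_on K"
proof -
  obtain a where a: "K \<subseteq> cbox (-a) a"
    using bounded_subset_cbox_symmetric[OF compact_imp_bounded[OF assms(2)]] by blast
  have "grad_sq (quad c0 c1 c2 c3 c4 c5) = (\<lambda>x. (norm (quad_grad c1 c2 c3 c4 c5 x))\<^sup>2)"
    by (rule ext) (rule grad_sq_quad)
  then have "continuous_on (cbox (-a) a) (grad_sq (quad c0 c1 c2 c3 c4 c5))"
    by (simp add: continuous_intros continuous_on_quad_grad)
  then have "grad_sq (quad c0 c1 c2 c3 c4 c5) absolutely_integrable_on cbox (-a) a"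
    by (rule absolutely_integrable_continuous)
  moreover have "K \<in> sets lebesgue"
    using assms(2) by (intro fmeasurableD lmeasurable_compact)
  ultimately have "grad_sq (quad c0 c1 c2 c3 c4 c5) absolutely_integrable_on K"
    using a by (rule set_integrable_subset)
  moreover have "negligible (frontier K)" using assms(1) by (rule negligible_convex_frontier)
  moreover have "grad_sq v x = grad_sq (quad c0 c1 c2 c3 c4 c5) x" if "x \<in> K - frontier K" for x
  proof -
    have "x \<in> interior K"
      using that closure_closed[OF compact_imp_closed[OF assms(2)]] by (simp add: frontier_def)
    then show ?thesis
      by (intro grad_sq_eq_on_interior[OF assms(3)] differentiableI[OF has_derivative_quad])
  qed
  ultimately show ?thesis by (rule absolutely_integrable_spike)
qed

section \<open>Inverse estimates for quadratics on convex sets\<close>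

lemma norm_dirder2_quad_le:
  assumes K: "cball z r \<subseteq> K" "0 < r" and M: "\<forall>x\<in>K. norm (quad_grad c1 c2 c3 c4 c5 x) \<le> M"
  shows "norm (dirder (dirder (quad c0 c1 c2 c3 c4 c5) d) d y) \<le> (norm d)\<^sup>2 * M / r"
proof -
  let ?D = "dirder (quad c0 c1 c2 c3 c4 c5)"
  let ?D2 = "\<lambda>u. dirder (?D u) u y"
  have unit: "norm (?D2 u) \<le> M / r" if "norm u = 1" for u
  proof -
    have "(2 * r) *\<^sub>R ?D2 u = ?D u ((z - r *\<^sub>R u) + (2 * r) *\<^sub>R u) - ?D u (z - r *\<^sub>R u)"
      by (rule dirder_quad_diff[symmetric])
    also have "(z - r *\<^sub>R u) + (2 * r) *\<^sub>R u = z + r *\<^sub>R u"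
      by (simp add: vec_eq_iff algebra_simps)
    finally have eq: "(2 * r) *\<^sub>R ?D2 u = ?D u (z + r *\<^sub>R u) - ?D u (z - r *\<^sub>R u)" .
    have DM: "norm (?D u x) \<le> M" if "x \<in> K" for x
      using norm_dirder_quad_le[of c0 c1 c2 c3 c4 c5 u x] M that \<open>norm u = 1\<close> by fastforce
    have "z + r *\<^sub>R u \<in> K" "z - r *\<^sub>R u \<in> K"
      using K that by (auto simp: dist_norm subset_iff)
    then have "norm (?D u (z + r *\<^sub>R u)) \<le> M" "norm (?D u (z - r *\<^sub>R u)) \<le> M"
      using DM by blast+
    moreover have "2 * r * norm (?D2 u) = norm (?D u (z + r *\<^sub>R u) - ?D u (z - r *\<^sub>R u))"
      using arg_cong[OF eq, of norm] K(2) by simp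
    ultimately have "2 * r * norm (?D2 u) \<le> 2 * M"
      using norm_triangle_ineq4[of "?D u (z + r *\<^sub>R u)" "?D u (z - r *\<^sub>R u)"] by linarith
    then show ?thesis using K(2) by (simp add: field_simps)
  qed
  show ?thesis
  proof (cases "d = 0")
    case True
    then show ?thesis by (simp add: dirder2_quad)
  next
    case False
    have "?D2 d = (norm d)\<^sup>2 *\<^sub>R ?D2 (sgn d)"
      using dirder2_quad_scaleR[of c0 c1 c2 c3 c4 c5 "norm d" "sgn d"] False by (simp add: sgn_div_norm)
    then show ?thesis
      using mult_left_mono[OF unit[of "sgn d"], of "(norm d)\<^sup>2"] False by (simp add: norm_sgn)
  qed
qed

lemma homothety_ball_preimage:
  fixes w z :: "'a::real_normed_vector"
  assumes "0 < t" "y \<in> ball (w + t *\<^sub>R (z - w)) (t * r)"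
  shows "w + (1 / t) *\<^sub>R (y - w) \<in> ball z r" "y = w + t *\<^sub>R ((w + (1 / t) *\<^sub>R (y - w)) - w)"
proof -
  have "w + (1 / t) *\<^sub>R (y - w) - z = (1 / t) *\<^sub>R (y - (w + t *\<^sub>R (z - w)))"
    using assms(1) by (simp add: algebra_simps)
  then have "dist z (w + (1 / t) *\<^sub>R (y - w)) = dist y (w + t *\<^sub>R (z - w)) / t"
    using assms(1) by (simp add: dist_norm norm_minus_commute[of z])
  then show "w + (1 / t) *\<^sub>R (y - w) \<in> ball z r"
    using assms by (simp add: dist_commute divide_less_eq mult.commute)
  show "y = w + t *\<^sub>R ((w + (1 / t) *\<^sub>R (y - w)) - w)"
    using assms(1) by simp
qed

lemma convex_homothety_ball_subset:
  fixes K :: "'a::real_normed_vector set"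
  assumes "convex K" "w \<in> K" "ball z r \<subseteq> K" "0 < t" "t \<le> 1"
  shows "ball (w + t *\<^sub>R (z - w)) (t * r) \<subseteq> K"
proof
  fix y assume y: "y \<in> ball (w + t *\<^sub>R (z - w)) (t * r)"
  define y' where "y' = w + (1 / t) *\<^sub>R (y - w)"
  have "y' \<in> K" using homothety_ball_preimage(1)[OF assms(4) y] assms(3) unfolding y'_def by blast
  moreover have "y = (1 - t) *\<^sub>R w + t *\<^sub>R y'"
    using homothety_ball_preimage(2)[OF assms(4) y] unfolding y'_def[symmetric] by (simp add: algebra_simps)
  ultimately show "y \<in> K" using convexD[OF assms(1,2)] assms(4,5) by simp
qed

lemma norm_quad_grad_ge_half_max:
  assumes "w \<in> K" "\<forall>x\<in>K. norm (quad_grad c1 c2 c3 c4 c5 x) \<le> norm (quad_grad c1 c2 c3 c4 c5 w)"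
    and "ball z r \<subseteq> K" "y \<in> ball (w + (1/4) *\<^sub>R (z - w)) ((1/4) * r)"
  shows "norm (quad_grad c1 c2 c3 c4 c5 w) / 2 \<le> norm (quad_grad c1 c2 c3 c4 c5 y)"
proof -
  let ?G = "quad_grad c1 c2 c3 c4 c5"
  define y' where "y' = w + 4 *\<^sub>R (y - w)"
  have "y' \<in> ball z r"
    using homothety_ball_preimage(1)[of "1/4" y w z r] assms(4) unfolding y'_def by simp
  then have "norm (?G y' - ?G w) \<le> 2 * norm (?G w)"
    using assms(1-3) norm_triangle_ineq4[of "?G y'" "?G w"] by fastforce
  moreover have "?G y = ?G w + (1/4) *\<^sub>R (?G y' - ?G w)"
    using quad_grad_affine[of c1 c2 c3 c4 c5 w "1/4" y'] unfolding y'_def by simp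
  then have "norm (?G w) - norm ((1/4) *\<^sub>R (?G y' - ?G w)) \<le> norm (?G y)"
    by (simp only: norm_diff_ineq)
  ultimately show ?thesis by simp
qed

lemma integral_const_disc: "0 \<le> r \<Longrightarrow> integral (ball (c::pt) r) (\<lambda>x. k) = k * (r\<^sup>2 * pi)"
  using lmeasure_integral[OF lmeasurable_ball[of c r]] integral_mult_right[of "ball c r" k "\<lambda>x. 1"]
  by (simp add: circle_area)

lemma quad_inverse_estimate:
  assumes K: "convex K" "compact K" "cball z r \<subseteq> K" "0 < r"
    and v: "\<forall>x\<in>K. v x = quad c0 c1 c2 c3 c4 c5 x"
    and U: "interior K \<subseteq> U" "grad_sq v integrable_on U"
  obtains M where "0 \<le> M" "\<forall>x\<in>K. norm (quad_grad c1 c2 c3 c4 c5 x) \<le> M"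
    "M\<^sup>2 * r\<^sup>2 * pi \<le> 64 * integral U (grad_sq v)"
proof -
  let ?G = "quad_grad c1 c2 c3 c4 c5"
  have "z \<in> K" using K(3,4) by auto
  moreover have "continuous_on K (\<lambda>x. norm (?G x))"
    by (intro continuous_on_norm continuous_on_quad_grad)
  ultimately obtain w where w: "w \<in> K" and wmax: "\<forall>x\<in>K. norm (?G x) \<le> norm (?G w)"
    using continuous_attains_sup[OF K(2)] by blast
  have ballK: "ball z r \<subseteq> K" using K(3) ball_subset_cball by blast
  define M where "M = norm (?G w)"
  define B where "B = ball (w + (1/4) *\<^sub>R (z - w)) ((1/4) * r)"
  have "B \<subseteq> K"
    unfolding B_def using K(3,4) by (intro convex_homothety_ball_subset[OF K(1) w]) auto
  then have BK: "B \<subseteq> interior K" by (intro interior_maximal) (auto simp: B_def)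
  have low: "M\<^sup>2 / 4 \<le> grad_sq v y" if "y \<in> B" for y
  proof -
    have "M / 2 \<le> norm (?G y)"
      using norm_quad_grad_ge_half_max[OF w wmax ballK that[unfolded B_def]] unfolding M_def by simp
    then have "(M / 2)\<^sup>2 \<le> (norm (?G y))\<^sup>2"
      by (rule power_mono) (simp add: M_def)
    moreover have "grad_sq v y = grad_sq (quad c0 c1 c2 c3 c4 c5) y"
      using BK that by (intro grad_sq_eq_on_interior[OF v] differentiableI[OF has_derivative_quad]) auto
    ultimately show ?thesis by (simp add: power_divide grad_sq_quad)
  qed
  have "grad_sq v absolutely_integrable_on U"
    using U(2) by (rule nonnegative_absolutely_integrable_1) (rule grad_sq_nonneg)
  moreover have "B \<in> sets lebesgue" unfolding B_def by (intro fmeasurableD lmeasurable_ball)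
  moreover have "B \<subseteq> U" using BK U(1) by blast
  ultimately have "grad_sq v absolutely_integrable_on B"
    by (rule set_integrable_subset)
  then have intB: "grad_sq v integrable_on B"
    by (simp add: absolutely_integrable_on_def)
  have "M\<^sup>2 / 4 * (((1/4) * r)\<^sup>2 * pi) = integral B (\<lambda>x. M\<^sup>2 / 4)"
    unfolding B_def using K(4) by (simp add: integral_const_disc)
  also have "\<dots> \<le> integral B (grad_sq v)"
    using intB low by (intro integral_le integrable_on_const) (auto simp: B_def)
  also have "\<dots> \<le> integral U (grad_sq v)"
    using BK U intB by (intro integral_subset_le) (auto simp: grad_sq_nonneg)
  finally have "M\<^sup>2 * r\<^sup>2 * pi \<le> 64 * integral U (grad_sq v)"
    by (simp add: power_divide field_simps)
  moreover have "\<forall>x\<in>K. norm (?G x) \<le> M" using wmax M_def by simp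
  ultimately show ?thesis using that[of M] M_def by simp
qed

lemma norm_quad_taylor_le:
  assumes "cball z r \<subseteq> K" "0 < r" "\<forall>y\<in>K. norm (quad_grad c1 c2 c3 c4 c5 y) \<le> g" "x \<in> K"
  shows "norm (dirder (quad c0 c1 c2 c3 c4 c5) m x + (1/2) *\<^sub>R dirder (dirder (quad c0 c1 c2 c3 c4 c5) m) m x)
    \<le> norm m * g + (norm m)\<^sup>2 * g / (2 * r)"
proof -
  have "norm (dirder (quad c0 c1 c2 c3 c4 c5) m x) \<le> norm m * g"
    using norm_dirder_quad_le[of c0 c1 c2 c3 c4 c5 m x] assms(3,4)
    by (meson mult_left_mono norm_ge_zero order_trans)
  moreover have "norm ((1/2) *\<^sub>R dirder (dirder (quad c0 c1 c2 c3 c4 c5) m) m x) \<le> (norm m)\<^sup>2 * g / (2 * r)"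
    using norm_dirder2_quad_le[OF assms(1-3), of c0 m x] by simp
  ultimately show ?thesis by (meson add_mono norm_triangle_le)
qed

lemma taylor_terms_sq_le:
  fixes c \<kappa> D g \<delta> :: real
  assumes "0 \<le> c" "c \<le> 1" "0 < \<kappa>" "0 < D" "0 \<le> g" "0 \<le> \<delta>" "\<delta> \<le> c * D"
  shows "(\<delta> * g + \<delta>\<^sup>2 * g / (2 * (D / (6 * \<kappa>))))\<^sup>2 \<le> c * (1 + 3 * \<kappa>)\<^sup>2 * (D\<^sup>2 * g\<^sup>2)"
proof -
  have "\<delta> * g + \<delta>\<^sup>2 * g / (2 * (D / (6 * \<kappa>))) \<le> c * D * g + (c * D)\<^sup>2 * g / (2 * (D / (6 * \<kappa>)))"
    using assms by (intro add_mono mult_right_mono divide_right_mono power_mono) auto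
  also have "\<dots> = c * D * g + c * (c * (3 * \<kappa>)) * D * g"
    using assms by (simp add: field_simps power2_eq_square)
  also have "\<dots> \<le> c * D * g + c * (1 * (3 * \<kappa>)) * D * g"
    using assms by (intro add_left_mono mult_right_mono mult_left_mono) auto
  finally have "\<delta> * g + \<delta>\<^sup>2 * g / (2 * (D / (6 * \<kappa>))) \<le> c * (1 + 3 * \<kappa>) * D * g"
    by (simp add: algebra_simps)
  then have "(\<delta> * g + \<delta>\<^sup>2 * g / (2 * (D / (6 * \<kappa>))))\<^sup>2 \<le> (c * (1 + 3 * \<kappa>) * D * g)\<^sup>2"
    using assms by (intro power_mono) auto
  also have "\<dots> = c * c * (1 + 3 * \<kappa>)\<^sup>2 * (D\<^sup>2 * g\<^sup>2)"
    by (simp add: power_mult_distrib power2_eq_square)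
  also have "\<dots> \<le> c * 1 * (1 + 3 * \<kappa>)\<^sup>2 * (D\<^sup>2 * g\<^sup>2)"
    using assms by (intro mult_right_mono mult_left_mono) auto
  finally show ?thesis by simp
qed

section \<open>Triangles and the Clough-Tocher split\<close>

lemma vertices_triangle:
  assumes "\<not> collinear {a, b, c :: pt}"
  shows "vertices (convex hull {a, b, c}) = {a, b, c}" "a \<noteq> b" "a \<noteq> c" "b \<noteq> c"
proof -
  have "\<not> affine_dependent {a, b, c}"
    using assms collinear_3_eq_affine_dependent by blast
  then show "vertices (convex hull {a, b, c}) = {a, b, c}"
    unfolding vertices_def using extreme_point_of_convex_hull_affine_independent by blast
  show "a \<noteq> b" "a \<noteq> c" "b \<noteq> c"
    using assms collinear_3_eq_affine_dependent by blast+
qed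

lemma edges_triangle:
  assumes "\<not> collinear {a, b, c :: pt}"
  shows "edges (convex hull {a, b, c}) = {closed_segment a b, closed_segment a c, closed_segment b c}"
  unfolding edges_def vertices_triangle[OF assms] using vertices_triangle(2-4)[OF assms]
  by (auto simp: closed_segment_commute)

lemma compact_triangle: "is_triangle T \<Longrightarrow> compact T"
  unfolding is_triangle_def by (auto intro: finite_imp_compact_convex_hull)

lemma finite_edges_triangle:
  assumes "is_triangle T" shows "finite (edges T)" "card (edges T) \<le> 3"
proof -
  obtain a b c where "\<not> collinear {a, b, c}" "T = convex hull {a, b, c}"
    using assms unfolding is_triangle_def by blast
  then have "edges T = {closed_segment a b, closed_segment a c, closed_segment b c}"
    using edges_triangle by blast
  then show "finite (edges T)" "card (edges T) \<le> 3"
    by (auto simp: card_insert_if)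
qed

lemma edge_of_triangleE:
  assumes "is_triangle T" "e \<in> edges T"
  obtains u v w where "T = convex hull {u, v, w}" "\<not> collinear {u, v, w}"
    "barycenter T = (1/3) *\<^sub>R (u + v + w)" "e = closed_segment u v" "u \<noteq> v"
proof -
  obtain a b c where nc: "\<not> collinear {a, b, c}" and T: "T = convex hull {a, b, c}"
    using assms(1) unfolding is_triangle_def by blast
  note vt = vertices_triangle[OF nc]
  obtain u v where e: "e = closed_segment u v" and uv: "u \<in> {a, b, c}" "v \<in> {a, b, c}" "u \<noteq> v"
    using assms(2) unfolding edges_def T vt(1) by blast
  obtain w where w: "{u, v, w} = {a, b, c}" "w \<noteq> u" "w \<noteq> v"
    using uv vt(2-4) by auto
  have "vertices T = {u, v, w}" using vt(1) T w(1) by simp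
  moreover have "(\<Sum>x\<in>{u, v, w}. x) = u + v + w" using uv(3) w(2,3) by (simp add: algebra_simps)
  ultimately have "barycenter T = (1/3) *\<^sub>R (u + v + w)"
    unfolding barycenter_def by simp
  with that show ?thesis using nc T w(1) e uv(3) by metis
qed

lemma convex_compact_ct_subtriangle:
  assumes "is_triangle T" "e \<in> edges T"
  shows "convex (convex hull (insert (barycenter T) e))" "compact (convex hull (insert (barycenter T) e))"
proof -
  obtain u v where "e = closed_segment u v" using edge_of_triangleE[OF assms] by metis
  then show "convex (convex hull (insert (barycenter T) e))" "compact (convex hull (insert (barycenter T) e))"
    by (auto intro: compact_convex_hull compact_insert compact_segment)
qed

text \<open>The contraction \<open>y \<mapsto> (y + u + v) / 3\<close> maps the triangle onto its Clough-Tocher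
  subtriangle on \<open>[u, v]\<close>.\<close>
lemma ball_subset_ct_subtriangle:
  fixes u v w x0 :: pt
  assumes "ball x0 \<rho> \<subseteq> convex hull {u, v, w}"
  shows "ball ((1/3) *\<^sub>R (x0 + u + v)) (\<rho>/3) \<subseteq> convex hull {(1/3) *\<^sub>R (u + v + w), u, v}"
proof
  fix y assume y: "y \<in> ball ((1/3) *\<^sub>R (x0 + u + v)) (\<rho>/3)"
  let ?y' = "3 *\<^sub>R y - u - v"
  have "?y' - x0 = 3 *\<^sub>R (y - (1/3) *\<^sub>R (x0 + u + v))" by (simp add: vec_eq_iff algebra_simps)
  then have "dist x0 ?y' = 3 * dist y ((1/3) *\<^sub>R (x0 + u + v))"
    by (simp add: dist_norm norm_minus_commute[of x0])
  then have "?y' \<in> convex hull {u, v, w}" using y assms by (auto simp: dist_commute)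
  then obtain s t q where stq: "0 \<le> s" "0 \<le> t" "0 \<le> q" "s + t + q = 1"
    and ye: "?y' = s *\<^sub>R u + t *\<^sub>R v + q *\<^sub>R w"
    unfolding convex_hull_3 by blast
  have "y = (1/3) *\<^sub>R (?y' + u + v)" by (simp add: vec_eq_iff algebra_simps)
  also have "\<dots> = q *\<^sub>R ((1/3) *\<^sub>R (u + v + w)) + ((s + 1 - q)/3) *\<^sub>R u + ((t + 1 - q)/3) *\<^sub>R v"
    unfolding ye by (simp add: vec_eq_iff algebra_simps diff_divide_distrib add_divide_distrib)
  finally have "y = q *\<^sub>R ((1/3) *\<^sub>R (u + v + w)) + ((s + 1 - q)/3) *\<^sub>R u + ((t + 1 - q)/3) *\<^sub>R v" .
  moreover have "0 \<le> (s + 1 - q)/3" "0 \<le> (t + 1 - q)/3" "q + (s + 1 - q)/3 + (t + 1 - q)/3 = 1"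
    using stq by (auto simp: field_simps)
  ultimately show "y \<in> convex hull {(1/3) *\<^sub>R (u + v + w), u, v}"
    unfolding convex_hull_3 using stq(3) by blast
qed

lemma triangle_subset_Union_ct_split:
  assumes "is_triangle T"
  shows "T \<subseteq> \<Union>(ct_split T)"
proof
  fix y assume "y \<in> T"
  obtain a b c where nc: "\<not> collinear {a, b, c}" and T: "T = convex hull {a, b, c}"
    using assms unfolding is_triangle_def by blast
  let ?b = "(1/3) *\<^sub>R (a + b + c)"
  have bary: "barycenter T = ?b"
    unfolding barycenter_def T vertices_triangle[OF nc]
    using vertices_triangle(2-4)[OF nc] by (simp add: algebra_simps)
  obtain l1 l2 l3 where l: "0 \<le> l1" "0 \<le> l2" "0 \<le> l3" "l1 + l2 + l3 = 1"
    and y: "y = l1 *\<^sub>R a + l2 *\<^sub>R b + l3 *\<^sub>R c"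
    using \<open>y \<in> T\<close> unfolding T convex_hull_3 by blast
  have mem: "y \<in> \<Union>(ct_split T)"
    if "closed_segment x x' \<in> edges T" "y = (3 * m) *\<^sub>R ?b + p *\<^sub>R x + q *\<^sub>R x'"
      "0 \<le> m" "0 \<le> p" "0 \<le> q" "3 * m + p + q = 1" for m p q x x'
  proof -
    have "y \<in> convex hull {?b, x, x'}"
      unfolding convex_hull_3
      by (rule CollectI, rule exI[of _ "3 * m"], rule exI[of _ p], rule exI[of _ q]) (use that(2-) in auto)
    moreover have "convex hull {?b, x, x'} = convex hull (insert (barycenter T) (closed_segment x x'))"
      unfolding bary by (simp only: segment_convex_hull hull_insert[symmetric])
    ultimately show ?thesis unfolding ct_split_def using that(1) by blast
  qed
  have E: "closed_segment a b \<in> edges T" "closed_segment b c \<in> edges T" "closed_segment a c \<in> edges T"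
    using edges_triangle[OF nc] T by auto
  \<comment> \<open>\<open>y\<close> lies in the subtriangle opposite the vertex of its smallest barycentric coordinate\<close>
  consider "l3 \<le> l1" "l3 \<le> l2" | "l1 \<le> l2" "l1 \<le> l3" | "l2 \<le> l1" "l2 \<le> l3" by linarith
  then show "y \<in> \<Union>(ct_split T)"
  proof cases
    case 1
    then show ?thesis
      using l by (intro mem[OF E(1), of l3 "l1 - l3" "l2 - l3"]) (auto simp: y vec_eq_iff algebra_simps)
  next
    case 2
    then show ?thesis
      using l by (intro mem[OF E(2), of l1 "l2 - l1" "l3 - l1"]) (auto simp: y vec_eq_iff algebra_simps)
  next
    case 3
    then show ?thesis
      using l by (intro mem[OF E(3), of l2 "l1 - l2" "l3 - l2"]) (auto simp: y vec_eq_iff algebra_simps)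
  qed
qed

lemma triangulation_interiors_disjoint:
  assumes "triangulation \<S> S" "T \<in> \<S>" "T' \<in> \<S>" "T \<noteq> T'"
  shows "interior T \<inter> interior T' = {}"
proof (rule ccontr)
  assume "interior T \<inter> interior T' \<noteq> {}"
  then obtain x where x: "x \<in> interior T" "x \<in> interior T'" by blast
  have "T \<inter> T' face_of T" "T \<inter> T' face_of T'"
    using assms(1-3) unfolding triangulation_def by blast+
  moreover have "x \<in> T \<inter> T'" using x interior_subset by blast
  moreover have "x \<notin> rel_frontier T" "x \<notin> rel_frontier T'"
    using x interior_subset_rel_interior by (auto simp: rel_frontier_def)
  ultimately have "T \<inter> T' = T" "T \<inter> T' = T'"
    using face_of_subset_rel_frontier by blast+
  then show False using assms(4) by blast
qed

section \<open>Integrals over edges\<close>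

lemma diameter_closed_segment: "diameter (closed_segment a (b::'a::euclidean_space)) = dist a b"
proof (rule antisym)
  show "diameter (closed_segment a b) \<le> dist a b"
  proof (rule diameter_le)
    fix x y assume "x \<in> closed_segment a b" "y \<in> closed_segment a b"
    then show "norm (x - y) \<le> dist a b"
      using dist_decreases_closed_segment[of x a b y] dist_in_closed_segment[of y a b]
      by (auto simp: dist_norm norm_minus_commute)
  qed simp
  show "dist a b \<le> diameter (closed_segment a b)"
    by (rule diameter_bounded_bound) (simp_all add: bounded_closed_segment)
qed

lemma segment_point_in_closed_segment: "t \<in> {0..1} \<Longrightarrow> a + t *\<^sub>R (b - a) \<in> closed_segment a b"
  unfolding closed_segment_def by (auto intro!: exI[of _ t] simp: algebra_simps)

lemma integral_unit_interval_reflect: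
  "integral {0..1::real} (\<lambda>t. g (1 - t)) = integral {0..1} (g :: real \<Rightarrow> real)"
proof -
  have "integral {(-1) - (-1)..0 - (-1::real)} (\<lambda>x. (\<lambda>y. g (- y)) (x + (-1))) = integral {-1..0} (\<lambda>y. g (- y))"
    by (rule integral_shift_real_ivl)
  moreover have "integral {-1..0::real} (\<lambda>y. g (- y)) = integral {0..1} g"
    using Henstock_Kurzweil_Integration.integral_reflect_real[where a=0 and b=1 and f=g] by simp
  ultimately show ?thesis by simp
qed

lemma edge_integral_closed_segment:
  assumes "a \<noteq> b"
  shows "edge_integral (closed_segment a b) f = dist a b * integral {0..1} (\<lambda>t. f (a + t *\<^sub>R (b - a)))"
proof -
  have reverse: "integral {0..1} (\<lambda>t. f (b + t *\<^sub>R (a - b))) = integral {0..1} (\<lambda>t. f (a + t *\<^sub>R (b - a)))"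
    using integral_unit_interval_reflect[of "\<lambda>s. f (a + s *\<^sub>R (b - a))"] by (simp add: algebra_simps)
  have "\<forall>a' b'. closed_segment a b = closed_segment a' b' \<and> a' \<noteq> b' \<longrightarrow>
      dist a b * integral {0..1} (\<lambda>t. f (a + t *\<^sub>R (b - a))) =
      dist a' b' * integral {0..1} (\<lambda>t. f (a' + t *\<^sub>R (b' - a')))"
  proof (intro allI impI)
    fix a' b' assume "closed_segment a b = closed_segment a' b' \<and> a' \<noteq> b'"
    then have "a' = a \<and> b' = b \<or> a' = b \<and> b' = a"
      by (metis closed_segment_eq doubleton_eq_iff)
    then show "dist a b * integral {0..1} (\<lambda>t. f (a + t *\<^sub>R (b - a))) =
        dist a' b' * integral {0..1} (\<lambda>t. f (a' + t *\<^sub>R (b' - a')))"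
      using reverse by (auto simp: dist_commute)
  qed
  then have "\<forall>a' b'. closed_segment a b = closed_segment a' b' \<and> a' \<noteq> b' \<longrightarrow>
      edge_integral (closed_segment a b) f = dist a' b' * integral {0..1} (\<lambda>t. f (a' + t *\<^sub>R (b' - a')))"
    unfolding edge_integral_def by (rule someI)
  then show ?thesis using assms by blast
qed

lemma edge_integral_nonneg:
  assumes "a \<noteq> b" "\<forall>x\<in>closed_segment a b. 0 \<le> f x"
  shows "0 \<le> edge_integral (closed_segment a b) f"
proof (cases "(\<lambda>t. f (a + t *\<^sub>R (b - a))) integrable_on {0..1}")
  case True
  then have "0 \<le> integral {0..1} (\<lambda>t. f (a + t *\<^sub>R (b - a)))"
    using assms(2) segment_point_in_closed_segment by (intro integral_nonneg) auto
  then show ?thesis by (simp add: edge_integral_closed_segment[OF assms(1)])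
qed (simp add: edge_integral_closed_segment[OF assms(1)] not_integrable_integral)

lemma edge_integral_mono:
  assumes "a \<noteq> b" "\<forall>x\<in>closed_segment a b. f x \<le> g x" "\<forall>x\<in>closed_segment a b. 0 \<le> g x"
    and "(\<lambda>t. g (a + t *\<^sub>R (b - a))) integrable_on {0..1}"
  shows "edge_integral (closed_segment a b) f \<le> edge_integral (closed_segment a b) g"
proof (cases "(\<lambda>t. f (a + t *\<^sub>R (b - a))) integrable_on {0..1}")
  case True
  then have "integral {0..1} (\<lambda>t. f (a + t *\<^sub>R (b - a))) \<le> integral {0..1} (\<lambda>t. g (a + t *\<^sub>R (b - a)))"
    using assms(2,4) segment_point_in_closed_segment by (intro integral_le) auto
  then show ?thesis
    by (simp add: edge_integral_closed_segment[OF assms(1)] mult_left_mono)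
next
  case False
  then show ?thesis
    using edge_integral_nonneg[OF assms(1,3)]
    by (simp add: edge_integral_closed_segment[OF assms(1)] not_integrable_integral)
qed

lemma edge_integral_affine:
  assumes "a \<noteq> b" "(\<lambda>t. g (a + t *\<^sub>R (b - a))) integrable_on {0..1}"
  shows "edge_integral (closed_segment a b) (\<lambda>x. k * g x + B)
    = k * edge_integral (closed_segment a b) g + dist a b * B"
proof -
  have "integral {0..1} (\<lambda>t. k * g (a + t *\<^sub>R (b - a)) + B)
      = k * integral {0..1} (\<lambda>t. g (a + t *\<^sub>R (b - a))) + B"
    using integrable_on_cmult_left[OF assms(2), of k]
      integral_add[of "\<lambda>t. k * g (a + t *\<^sub>R (b - a))" "{0..1}" "\<lambda>t. B"]
    by (simp add: integrable_const_ivl)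
  then show ?thesis by (simp add: edge_integral_closed_segment[OF assms(1)] distrib_left)
qed

lemma integrable_on_segment_norm_sq:
  fixes a b :: "'a::real_normed_vector" and u :: "'a \<Rightarrow> 'b::real_normed_vector"
  assumes "continuous_on (closed_segment a b) u"
  shows "(\<lambda>t. (norm (u (a + t *\<^sub>R (b - a))))\<^sup>2) integrable_on {0..1}"
proof -
  have "continuous_on {0..1} (\<lambda>t. a + t *\<^sub>R (b - a))"
    by (intro continuous_intros)
  then have "continuous_on {0..1} (\<lambda>t. u (a + t *\<^sub>R (b - a)))"
    using segment_point_in_closed_segment[of _ a b] by (intro continuous_on_compose2[OF assms]) auto
  then show ?thesis
    by (intro integrable_continuous_real continuous_intros)
qed

lemma divide_le_add_bound:
  fixes d :: real
  assumes "0 < d" "X \<le> k * Y + d * B"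
  shows "X / d \<le> k * (Y / d) + B"
proof -
  have "X / d \<le> (k * Y + d * B) / d" using assms by (simp add: divide_right_mono)
  also have "\<dots> = k * (Y / d) + B" using assms(1) by (simp add: field_simps)
  finally show ?thesis .
qed

lemma edge_L2sq_le:
  assumes "a \<noteq> b" "\<forall>x\<in>closed_segment a b. (norm (w x))\<^sup>2 \<le> B"
  shows "edge_L2sq (closed_segment a b) w \<le> dist a b * B"
proof -
  have "0 \<le> B" using assms(2) by (meson ends_in_segment(1) order_trans zero_le_power2)
  then have "edge_L2sq (closed_segment a b) w \<le> edge_integral (closed_segment a b) (\<lambda>x. B)"
    unfolding edge_L2sq_def using assms(2) by (intro edge_integral_mono[OF assms(1)]) auto
  then show ?thesis by (simp add: edge_integral_closed_segment[OF assms(1)])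
qed

lemma edge_L2sq_le_perturb:
  assumes "a \<noteq> b" "continuous_on (closed_segment a b) u"
    and "\<forall>x\<in>closed_segment a b. (norm (w x - u x))\<^sup>2 \<le> B"
  shows "edge_L2sq (closed_segment a b) w \<le> 2 * edge_L2sq (closed_segment a b) u + dist a b * (2 * B)"
proof -
  have "(norm (w x))\<^sup>2 \<le> 2 * (norm (u x))\<^sup>2 + 2 * B" if "x \<in> closed_segment a b" for x
  proof -
    have "(norm (w x))\<^sup>2 \<le> (norm (u x) + norm (w x - u x))\<^sup>2"
      using norm_triangle_sub[of "w x" "u x"] by (intro power_mono) (auto simp: algebra_simps)
    also have "\<dots> \<le> 2 * (norm (u x))\<^sup>2 + 2 * (norm (w x - u x))\<^sup>2"
      using sum_squares_bound[of "norm (u x)" "norm (w x - u x)"] by (simp add: power2_eq_square algebra_simps)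
    finally show ?thesis using assms(3) that by fastforce
  qed
  moreover have "0 \<le> B" using assms(3) by (meson ends_in_segment(1) order_trans zero_le_power2)
  moreover note int_u = integrable_on_segment_norm_sq[OF assms(2)]
  ultimately have "edge_L2sq (closed_segment a b) w
      \<le> edge_integral (closed_segment a b) (\<lambda>x. 2 * (norm (u x))\<^sup>2 + 2 * B)"
    unfolding edge_L2sq_def
    by (intro edge_integral_mono[OF assms(1)]) (auto intro: integrable_add integrable_on_cmult_left)
  also have "\<dots> = 2 * edge_L2sq (closed_segment a b) u + dist a b * (2 * B)"
    unfolding edge_L2sq_def by (rule edge_integral_affine[OF assms(1) int_u])
  finally show ?thesis .
qed

section \<open>The finite element mesh\<close>

locale fe_mesh =
  fixes \<T> :: "pt set set" and v :: "pt \<Rightarrow> pt"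
  assumes finite_mesh: "finite \<T>"
    and triangle: "T \<in> \<T> \<Longrightarrow> is_triangle T"
    and interiors_disjoint: "T \<in> \<T> \<Longrightarrow> T' \<in> \<T> \<Longrightarrow> T \<noteq> T' \<Longrightarrow> interior T \<inter> interior T' = {}"
    and v_in_Vh: "v \<in> Vh \<T>"
begin

lemma piece_on_ct_elem:
  assumes "K \<in> ct_mesh \<T>"
  shows "piece v K \<in> P2" "\<forall>x\<in>K. v x = piece v K x"
proof -
  have "\<exists>p. p \<in> P2 \<and> (\<forall>x\<in>K. v x = p x)" using v_in_Vh assms unfolding Vh_def by blast
  then have "piece v K \<in> P2 \<and> (\<forall>x\<in>K. v x = piece v K x)"
    unfolding piece_def by (rule someI_ex)
  then show "piece v K \<in> P2" "\<forall>x\<in>K. v x = piece v K x" by auto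
qed

lemma grad_sq_absolutely_integrable_on_mesh_domain:
  "grad_sq v absolutely_integrable_on mesh_domain \<T>"
proof -
  have "finite (ct_mesh \<T>)"
    unfolding ct_mesh_def ct_split_def using finite_mesh finite_edges_triangle(1)[OF triangle] by auto
  moreover have "grad_sq v absolutely_integrable_on K" if K: "K \<in> ct_mesh \<T>" for K
  proof -
    obtain T e where "T \<in> \<T>" "e \<in> edges T" "K = convex hull (insert (barycenter T) e)"
      using K unfolding ct_mesh_def ct_split_def by blast
    moreover obtain c0 c1 c2 c3 c4 c5 where "piece v K = quad c0 c1 c2 c3 c4 c5"
      using P2_imp_quad piece_on_ct_elem(1)[OF K] by blast
    ultimately show ?thesis
      using piece_on_ct_elem(2)[OF K] convex_compact_ct_subtriangle[OF triangle]
      by (intro grad_sq_quad_piece_absolutely_integrable) auto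
  qed
  ultimately have int: "grad_sq v absolutely_integrable_on \<Union>(ct_mesh \<T>)"
    by (induction rule: finite_induct) (auto intro: absolutely_integrable_Un)
  have sub: "mesh_domain \<T> \<subseteq> \<Union>(ct_mesh \<T>)"
  proof -
    have "mesh_domain \<T> \<subseteq> (\<Union>T\<in>\<T>. closure T)" unfolding mesh_domain_def by (rule interior_subset)
    also have "\<dots> = \<Union>\<T>"
      using compact_triangle[OF triangle] by (simp add: compact_imp_closed)
    also have "\<dots> \<subseteq> \<Union>(ct_mesh \<T>)"
      unfolding ct_mesh_def using triangle_subset_Union_ct_split[OF triangle] by blast
    finally show ?thesis .
  qed
  have "mesh_domain \<T> \<in> sets lebesgue"
    unfolding mesh_domain_def by (simp add: borel_open sets_completionI_sets)
  then show ?thesis using set_integrable_subset[OF int _ sub] by blast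
qed

lemma interior_subset_mesh_domain: "T \<in> \<T> \<Longrightarrow> interior T \<subseteq> mesh_domain \<T>"
  unfolding mesh_domain_def by (intro interior_mono) (auto intro: closure_subset[THEN subsetD])

lemma grad_sq_integrable_on_interior: "T \<in> \<T> \<Longrightarrow> grad_sq v integrable_on interior T"
  using set_integrable_subset[OF grad_sq_absolutely_integrable_on_mesh_domain _ interior_subset_mesh_domain]
  by (simp add: absolutely_integrable_on_def borel_open sets_completionI_sets)

lemma grad_L2sq_nonneg: "0 \<le> grad_L2sq \<T> v"
  unfolding grad_L2sq_def using grad_sq_absolutely_integrable_on_mesh_domain
  by (intro integral_nonneg) (auto simp: grad_sq_nonneg absolutely_integrable_on_def)

lemma sum_integral_interiors_le: "(\<Sum>T\<in>\<T>. integral (interior T) (grad_sq v)) \<le> grad_L2sq \<T> v"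
proof -
  have "(grad_sq v has_integral (\<Sum>T\<in>\<T>. integral (interior T) (grad_sq v))) (\<Union>T\<in>\<T>. interior T)"
    using interiors_disjoint grad_sq_integrable_on_interior
    by (intro has_integral_UN[OF finite_mesh]) (auto simp: pairwise_def)
  then have "integral (\<Union>T\<in>\<T>. interior T) (grad_sq v) = (\<Sum>T\<in>\<T>. integral (interior T) (grad_sq v))"
    and "grad_sq v integrable_on (\<Union>T\<in>\<T>. interior T)"
    by (auto simp: integral_unique has_integral_integrable)
  moreover have "(\<Union>T\<in>\<T>. interior T) \<subseteq> mesh_domain \<T>"
    using interior_subset_mesh_domain by blast
  ultimately show ?thesis
    unfolding grad_L2sq_def using grad_sq_absolutely_integrable_on_mesh_domain
    by (metis integral_subset_le grad_sq_nonneg absolutely_integrable_on_def)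
qed

lemma elem_of_edge:
  assumes "e \<in> bdry_edges \<T>"
  shows "elem_of_edge \<T> e \<in> \<T>" "e \<in> edges (elem_of_edge \<T> e)"
proof -
  have "\<exists>T. T \<in> \<T> \<and> e \<in> edges T" using assms unfolding bdry_edges_def by blast
  then have "elem_of_edge \<T> e \<in> \<T> \<and> e \<in> edges (elem_of_edge \<T> e)"
    unfolding elem_of_edge_def by (rule someI_ex)
  then show "elem_of_edge \<T> e \<in> \<T>" "e \<in> edges (elem_of_edge \<T> e)" by auto
qed

lemma finite_bdry_edges: "finite (bdry_edges \<T>)"
proof (rule finite_subset)
  show "bdry_edges \<T> \<subseteq> (\<Union>T\<in>\<T>. edges T)" unfolding bdry_edges_def by blast
qed (use finite_mesh finite_edges_triangle(1)[OF triangle] in blast)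

lemma bdry_edge_segment:
  assumes "e \<in> bdry_edges \<T>"
  obtains a b where "e = closed_segment a b" "a \<noteq> b"
  using edge_of_triangleE[OF triangle elem_of_edge(2)] elem_of_edge(1) assms by metis

lemma sum_bdry_nonneg:
  "0 \<le> (\<Sum>e\<in>bdry_edges \<T>. edge_L2sq e (w e) / diameter e)"
  "0 \<le> (\<Sum>e\<in>bdry_edges \<T>. diameter e * edge_integral e (grad_sq (p e)))"
proof -
  have "0 \<le> edge_L2sq e (w e) / diameter e \<and> 0 \<le> diameter e * edge_integral e (grad_sq (p e))"
    if e: "e \<in> bdry_edges \<T>" for e
  proof -
    obtain a b where "e = closed_segment a b" "a \<noteq> b" using bdry_edge_segment[OF e] .
    then show ?thesis
      unfolding edge_L2sq_def using diameter_ge_0[of e]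
      by (auto intro!: edge_integral_nonneg divide_nonneg_nonneg mult_nonneg_nonneg
          simp: grad_sq_nonneg bounded_closed_segment)
  qed
  then show "0 \<le> (\<Sum>e\<in>bdry_edges \<T>. edge_L2sq e (w e) / diameter e)"
    "0 \<le> (\<Sum>e\<in>bdry_edges \<T>. diameter e * edge_integral e (grad_sq (p e)))"
    by (auto intro: sum_nonneg)
qed

lemma sum_bdry_elem_integrals_le:
  "(\<Sum>e\<in>bdry_edges \<T>. integral (interior (elem_of_edge \<T> e)) (grad_sq v)) \<le> 3 * grad_L2sq \<T> v"
proof -
  let ?E = "bdry_edges \<T>" and ?t = "elem_of_edge \<T>" and ?I = "\<lambda>T. integral (interior T) (grad_sq v)"
  have I0: "0 \<le> ?I T" if "T \<in> \<T>" for T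
    using grad_sq_integrable_on_interior[OF that] by (intro integral_nonneg) (auto simp: grad_sq_nonneg)
  have "(\<Sum>e\<in>?E. ?I (?t e)) = (\<Sum>T\<in>?t ` ?E. (\<Sum>e\<in>{e\<in>?E. ?t e = T}. ?I (?t e)))"
    by (rule sum.image_gen[OF finite_bdry_edges])
  also have "\<dots> = (\<Sum>T\<in>?t ` ?E. of_nat (card {e\<in>?E. ?t e = T}) * ?I T)"
    by (intro sum.cong refl) simp
  also have "\<dots> \<le> (\<Sum>T\<in>?t ` ?E. 3 * ?I T)"
  proof (intro sum_mono mult_right_mono)
    fix T assume "T \<in> ?t ` ?E"
    then have T: "T \<in> \<T>" using elem_of_edge by blast
    have "{e\<in>?E. ?t e = T} \<subseteq> edges T" using elem_of_edge by blast
    then have "card {e\<in>?E. ?t e = T} \<le> card (edges T)"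
      using finite_edges_triangle(1)[OF triangle[OF T]] by (rule card_mono[rotated])
    then show "real (card {e\<in>?E. ?t e = T}) \<le> 3"
      using finite_edges_triangle(2)[OF triangle[OF T]] by simp
    show "0 \<le> ?I T" using I0[OF T] .
  qed
  also have "\<dots> \<le> (\<Sum>T\<in>\<T>. 3 * ?I T)"
    using elem_of_edge I0 finite_mesh by (intro sum_mono2) auto
  also have "\<dots> \<le> 3 * grad_L2sq \<T> v"
    using sum_integral_interiors_le by (simp add: sum_distrib_left[symmetric])
  finally show ?thesis .
qed

end

section \<open>Estimates on the boundary edges\<close>

text \<open>Written in the displacement \<open>M x - x\<close> instead of \<open>\<delta>\<close> and \<open>d\<close>, \<open>S\<^sub>h\<close> has no division
  by \<open>\<delta>(x)\<close> and is visibly continuous.\<close>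
lemma Sh_eq_taylor:
  assumes "piece v (adj_elem \<T> e) = quad c0 c1 c2 c3 c4 c5" "v x = quad c0 c1 c2 c3 c4 c5 x"
  shows "Sh M \<T> v e x = quad c0 c1 c2 c3 c4 c5 x + dirder (quad c0 c1 c2 c3 c4 c5) (M x - x) x
      + (1/2) *\<^sub>R dirder (dirder (quad c0 c1 c2 c3 c4 c5) (M x - x)) (M x - x) x"
proof -
  let ?p = "quad c0 c1 c2 c3 c4 c5" and ?m = "M x - x"
  have "?m = norm ?m *\<^sub>R (?m /\<^sub>R norm ?m)" by (cases "?m = 0") simp_all
  then have "dirder ?p ?m x = norm ?m *\<^sub>R dirder ?p (?m /\<^sub>R norm ?m) x"
    and "dirder (dirder ?p ?m) ?m x = (norm ?m)\<^sup>2 *\<^sub>R dirder (dirder ?p (?m /\<^sub>R norm ?m)) (?m /\<^sub>R norm ?m) x"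
    by (metis dirder_quad_scaleR, metis dirder2_quad_scaleR)
  then show ?thesis unfolding Sh_def Let_def assms by simp
qed

lemma continuous_on_Sh:
  assumes "piece v (adj_elem \<T> e) = quad c0 c1 c2 c3 c4 c5" "\<forall>x\<in>S. v x = quad c0 c1 c2 c3 c4 c5 x"
    and "continuous_on S M"
  shows "continuous_on S (Sh M \<T> v e)"
proof (rule continuous_on_eq)
  show "continuous_on S (\<lambda>x. quad c0 c1 c2 c3 c4 c5 x + dirder (quad c0 c1 c2 c3 c4 c5) (M x - x) x
      + (1/2) *\<^sub>R dirder (dirder (quad c0 c1 c2 c3 c4 c5) (M x - x)) (M x - x) x)"
    unfolding dirder_quad dirder2_quad quad_grad_def
    using assms(3) by (intro continuous_intros continuous_on_quad) auto
  show "\<And>x. x \<in> S \<Longrightarrow> quad c0 c1 c2 c3 c4 c5 x + dirder (quad c0 c1 c2 c3 c4 c5) (M x - x) x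
      + (1/2) *\<^sub>R dirder (dirder (quad c0 c1 c2 c3 c4 c5) (M x - x)) (M x - x) x = Sh M \<T> v e x"
    using Sh_eq_taylor[OF assms(1)] assms(2) by auto
qed

locale fe_boundary_map = fe_mesh +
  fixes \<kappa> c :: real and M :: "pt \<Rightarrow> pt"
  assumes kappa_ge_1: "1 \<le> \<kappa>" and c_nonneg: "0 \<le> c" and c_le_1: "c \<le> 1"
    and inscribed_ball: "T \<in> \<T> \<Longrightarrow> \<exists>x. ball x (diameter T / \<kappa>) \<subseteq> T"
    and displacement_le: "e \<in> bdry_edges \<T> \<Longrightarrow> x \<in> e \<Longrightarrow> norm (M x - x) \<le> c * diameter e"
    and continuous_M: "continuous_on (frontier (mesh_domain \<T>)) M"
begin

lemma adj_elem_geometry: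
  assumes e: "e \<in> bdry_edges \<T>"
  defines "T \<equiv> elem_of_edge \<T> e" and "K \<equiv> adj_elem \<T> e"
  obtains a b z where "e = closed_segment a b" "a \<noteq> b" "diameter e \<le> diameter T"
    "K \<in> ct_mesh \<T>" "convex K" "compact K" "e \<subseteq> K" "K \<subseteq> T"
    "cball z (diameter T / (6 * \<kappa>)) \<subseteq> K"
proof -
  note T = elem_of_edge[OF e, folded T_def]
  obtain a1 a2 a3 where Tc: "T = convex hull {a1, a2, a3}"
    and bary: "barycenter T = (1/3) *\<^sub>R (a1 + a2 + a3)" and ea: "e = closed_segment a1 a2" "a1 \<noteq> a2"
    using edge_of_triangleE[OF triangle[OF T(1)] T(2)] by metis
  have K: "K = convex hull (insert (barycenter T) e)"
    unfolding K_def adj_elem_def T_def ..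
  then have Kc: "K = convex hull {(1/3) *\<^sub>R (a1 + a2 + a3), a1, a2}"
    unfolding bary ea segment_convex_hull by (simp only: hull_insert[symmetric])
  have "K \<in> ct_mesh \<T>" unfolding ct_mesh_def ct_split_def K using T by blast
  moreover have "convex K" "compact K"
    unfolding K using convex_compact_ct_subtriangle[OF triangle[OF T(1)] T(2)] by auto
  moreover have "e \<subseteq> K" unfolding ea Kc by (intro closed_segment_subset) (auto intro: hull_inc)
  moreover have "K \<subseteq> T"
  proof -
    have "(1/3) *\<^sub>R (a1 + a2 + a3) \<in> T"
      unfolding Tc convex_hull_3
      by (rule CollectI, rule exI[of _ "1/3"], rule exI[of _ "1/3"], rule exI[of _ "1/3"]) (simp add: scaleR_add_right)
    then show ?thesis
      unfolding Kc using Tc by (intro hull_minimal) (auto intro: hull_inc convex_convex_hull)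
  qed
  moreover have "diameter e \<le> diameter T"
    using \<open>e \<subseteq> K\<close> \<open>K \<subseteq> T\<close> compact_triangle[OF triangle[OF T(1)]]
    by (intro diameter_subset) (auto intro: compact_imp_bounded)
  moreover obtain z where "cball z (diameter T / (6 * \<kappa>)) \<subseteq> K"
  proof -
    obtain x0 where "ball x0 (diameter T / \<kappa>) \<subseteq> T" using inscribed_ball[OF T(1)] by blast
    then have "ball ((1/3) *\<^sub>R (x0 + a1 + a2)) (diameter T / \<kappa> / 3) \<subseteq> K"
      unfolding Kc Tc by (rule ball_subset_ct_subtriangle)
    moreover have "0 < diameter T"
      using \<open>diameter e \<le> diameter T\<close> ea diameter_closed_segment[of a1 a2]
      by (metis dist_pos_lt order_less_le_trans)
    then have "cball ((1/3) *\<^sub>R (x0 + a1 + a2)) (diameter T / (6 * \<kappa>))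
        \<subseteq> ball ((1/3) *\<^sub>R (x0 + a1 + a2)) (diameter T / \<kappa> / 3)"
      unfolding cball_subset_ball_iff using kappa_ge_1 by (simp add: field_simps)
    ultimately show ?thesis using that by blast
  qed
  ultimately show ?thesis using that ea by blast
qed

lemma bdry_edge_local_bounds:
  assumes e: "e \<in> bdry_edges \<T>"
  defines "T \<equiv> elem_of_edge \<T> e"
  obtains a b g where "e = closed_segment a b" "a \<noteq> b" "dist a b \<le> diameter T"
    "(diameter T)\<^sup>2 * g\<^sup>2 \<le> 2304 * \<kappa>\<^sup>2 / pi * integral (interior T) (grad_sq v)"
    "\<forall>x\<in>e. (norm (Sh M \<T> v e x - v x))\<^sup>2 \<le> c * (1 + 3 * \<kappa>)\<^sup>2 * ((diameter T)\<^sup>2 * g\<^sup>2)"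
    "\<forall>x\<in>e. grad_sq (piece v (adj_elem \<T> e)) x \<le> g\<^sup>2"
    "continuous_on e v" "continuous_on e (Sh M \<T> v e)"
proof -
  let ?K = "adj_elem \<T> e" and ?D = "diameter T"
  obtain a b z where ab: "e = closed_segment a b" "a \<noteq> b" and eT: "diameter e \<le> ?D"
    and K: "?K \<in> ct_mesh \<T>" "convex ?K" "compact ?K" "e \<subseteq> ?K" "?K \<subseteq> T"
    and ball: "cball z (?D / (6 * \<kappa>)) \<subseteq> ?K"
    using adj_elem_geometry[OF e] unfolding T_def by blast
  have dist_ab: "dist a b \<le> ?D" using eT ab by (simp add: diameter_closed_segment)
  have D: "0 < ?D" using dist_ab ab(2) by (meson dist_pos_lt order_less_le_trans)
  have kappa: "0 < \<kappa>" using kappa_ge_1 by simp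
  define r where "r = ?D / (6 * \<kappa>)"
  have r: "0 < r" unfolding r_def using D kappa by simp
  obtain c0 c1 c2 c3 c4 c5 where p: "piece v ?K = quad c0 c1 c2 c3 c4 c5"
    using P2_imp_quad piece_on_ct_elem(1)[OF K(1)] by blast
  have vK: "\<forall>x\<in>?K. v x = quad c0 c1 c2 c3 c4 c5 x" using piece_on_ct_elem(2)[OF K(1)] p by simp
  obtain g where g: "0 \<le> g" "\<forall>x\<in>?K. norm (quad_grad c1 c2 c3 c4 c5 x) \<le> g"
    and g_int: "g\<^sup>2 * r\<^sup>2 * pi \<le> 64 * integral (interior T) (grad_sq v)"
    using quad_inverse_estimate[OF K(2,3) ball[folded r_def] r vK interior_mono[OF K(5)]
        grad_sq_integrable_on_interior[OF elem_of_edge(1)[OF e, folded T_def]]] by blast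
  have "?D\<^sup>2 * g\<^sup>2 = 2304 * \<kappa>\<^sup>2 / pi * (g\<^sup>2 * r\<^sup>2 * pi / 64)"
    unfolding r_def using kappa by (simp add: field_simps power2_eq_square)
  also have "\<dots> \<le> 2304 * \<kappa>\<^sup>2 / pi * integral (interior T) (grad_sq v)"
    using g_int by (intro mult_left_mono) auto
  finally have inverse: "?D\<^sup>2 * g\<^sup>2 \<le> 2304 * \<kappa>\<^sup>2 / pi * integral (interior T) (grad_sq v)" .
  have taylor: "(norm (Sh M \<T> v e x - v x))\<^sup>2 \<le> c * (1 + 3 * \<kappa>)\<^sup>2 * (?D\<^sup>2 * g\<^sup>2)" if x: "x \<in> e" for x
  proof -
    let ?m = "M x - x"
    have "Sh M \<T> v e x - v x = dirder (quad c0 c1 c2 c3 c4 c5) ?m x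
        + (1/2) *\<^sub>R dirder (dirder (quad c0 c1 c2 c3 c4 c5) ?m) ?m x"
      using Sh_eq_taylor[OF p] vK K(4) x by auto
    then have "norm (Sh M \<T> v e x - v x) \<le> norm ?m * g + (norm ?m)\<^sup>2 * g / (2 * r)"
      using norm_quad_taylor_le[OF ball[folded r_def] r g(2)] K(4) x by auto
    then have "(norm (Sh M \<T> v e x - v x))\<^sup>2 \<le> (norm ?m * g + (norm ?m)\<^sup>2 * g / (2 * r))\<^sup>2"
      by (rule power_mono) simp
    also have "\<dots> \<le> c * (1 + 3 * \<kappa>)\<^sup>2 * (?D\<^sup>2 * g\<^sup>2)"
      unfolding r_def using displacement_le[OF e x] eT c_nonneg
      by (intro taylor_terms_sq_le[OF c_nonneg c_le_1 kappa D g(1)]) (auto intro: order_trans mult_left_mono)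
    finally show ?thesis .
  qed
  have grad: "grad_sq (piece v ?K) x \<le> g\<^sup>2" if "x \<in> e" for x
    using g(2) K(4) that by (auto simp: p grad_sq_quad intro!: power_mono)
  have "e \<subseteq> frontier (mesh_domain \<T>)" using e unfolding bdry_edges_def by blast
  then have "continuous_on e (Sh M \<T> v e)"
    using K(4) vK by (intro continuous_on_Sh[OF p] continuous_on_subset[OF continuous_M]) auto
  moreover have "continuous_on e v"
    using K(4) vK by (intro continuous_on_eq[OF continuous_on_quad]) auto
  ultimately show ?thesis using that ab dist_ab inverse taylor grad by blast
qed

lemma bdry_edge_Sh_estimates:
  assumes e: "e \<in> bdry_edges \<T>"
  defines "I \<equiv> integral (interior (elem_of_edge \<T> e)) (grad_sq v)"
    and "A \<equiv> 2304 * \<kappa>\<^sup>2 / pi"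
  shows "edge_L2sq e (\<lambda>x. Sh M \<T> v e x - v x) / diameter e \<le> c * (1 + 3 * \<kappa>)\<^sup>2 * A * I"
    "edge_L2sq e (Sh M \<T> v e) / diameter e \<le> 2 * (edge_L2sq e v / diameter e) + 2 * (c * (1 + 3 * \<kappa>)\<^sup>2 * A * I)"
    "edge_L2sq e v / diameter e \<le> 2 * (edge_L2sq e (Sh M \<T> v e) / diameter e) + 2 * (c * (1 + 3 * \<kappa>)\<^sup>2 * A * I)"
proof -
  let ?D = "diameter (elem_of_edge \<T> e)"
  obtain a b g where ab: "e = closed_segment a b" "a \<noteq> b"
    and inverse: "?D\<^sup>2 * g\<^sup>2 \<le> A * I"
    and taylor: "\<forall>x\<in>e. (norm (Sh M \<T> v e x - v x))\<^sup>2 \<le> c * (1 + 3 * \<kappa>)\<^sup>2 * (?D\<^sup>2 * g\<^sup>2)"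
    and cont: "continuous_on e v" "continuous_on e (Sh M \<T> v e)"
    by (rule bdry_edge_local_bounds[OF e], rule that) (simp_all only: A_def I_def)
  let ?B = "c * (1 + 3 * \<kappa>)\<^sup>2 * (?D\<^sup>2 * g\<^sup>2)"
  have B: "?B \<le> c * (1 + 3 * \<kappa>)\<^sup>2 * A * I"
    using inverse c_nonneg by (simp add: mult.assoc mult_left_mono)
  have de: "diameter e = dist a b" "0 < dist a b"
    using ab by (simp_all add: diameter_closed_segment)
  have "edge_L2sq e (\<lambda>x. Sh M \<T> v e x - v x) \<le> dist a b * ?B"
    using taylor unfolding ab by (intro edge_L2sq_le[OF ab(2)]) auto
  then have "edge_L2sq e (\<lambda>x. Sh M \<T> v e x - v x) \<le> ?B * dist a b"
    by (simp only: mult.commute)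
  then have "edge_L2sq e (\<lambda>x. Sh M \<T> v e x - v x) / dist a b \<le> ?B"
    by (simp only: pos_divide_le_eq[OF de(2)])
  then show "edge_L2sq e (\<lambda>x. Sh M \<T> v e x - v x) / diameter e \<le> c * (1 + 3 * \<kappa>)\<^sup>2 * A * I"
    using B unfolding de(1) by linarith
  have "edge_L2sq e (Sh M \<T> v e) \<le> 2 * edge_L2sq e v + dist a b * (2 * ?B)"
    using cont taylor unfolding ab by (intro edge_L2sq_le_perturb[OF ab(2)]) auto
  then have "edge_L2sq e (Sh M \<T> v e) / dist a b \<le> 2 * (edge_L2sq e v / dist a b) + 2 * ?B"
    by (rule divide_le_add_bound[OF de(2)])
  then show "edge_L2sq e (Sh M \<T> v e) / diameter e
      \<le> 2 * (edge_L2sq e v / diameter e) + 2 * (c * (1 + 3 * \<kappa>)\<^sup>2 * A * I)"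
    using B unfolding de(1) by linarith
  have "edge_L2sq e v \<le> 2 * edge_L2sq e (Sh M \<T> v e) + dist a b * (2 * ?B)"
    using cont taylor unfolding ab by (intro edge_L2sq_le_perturb[OF ab(2)]) (auto simp: norm_minus_commute)
  then have "edge_L2sq e v / dist a b \<le> 2 * (edge_L2sq e (Sh M \<T> v e) / dist a b) + 2 * ?B"
    by (rule divide_le_add_bound[OF de(2)])
  then show "edge_L2sq e v / diameter e
      \<le> 2 * (edge_L2sq e (Sh M \<T> v e) / diameter e) + 2 * (c * (1 + 3 * \<kappa>)\<^sup>2 * A * I)"
    using B unfolding de(1) by linarith
qed

lemma bdry_edge_trace_grad_estimate:
  assumes e: "e \<in> bdry_edges \<T>"
  shows "diameter e * edge_integral e (grad_sq (piece v (adj_elem \<T> e)))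
    \<le> 2304 * \<kappa>\<^sup>2 / pi * integral (interior (elem_of_edge \<T> e)) (grad_sq v)"
proof -
  let ?D = "diameter (elem_of_edge \<T> e)"
  obtain a b g where ab: "e = closed_segment a b" "a \<noteq> b" "dist a b \<le> ?D"
    and inverse: "?D\<^sup>2 * g\<^sup>2 \<le> 2304 * \<kappa>\<^sup>2 / pi * integral (interior (elem_of_edge \<T> e)) (grad_sq v)"
    and grad: "\<forall>x\<in>e. grad_sq (piece v (adj_elem \<T> e)) x \<le> g\<^sup>2"
    by (rule bdry_edge_local_bounds[OF e], rule that) assumption+
  have de: "diameter e = dist a b" "0 < dist a b"
    using ab by (simp_all add: diameter_closed_segment)
  have "edge_integral e (grad_sq (piece v (adj_elem \<T> e))) \<le> edge_integral e (\<lambda>x. g\<^sup>2)"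
    using grad unfolding ab by (intro edge_integral_mono[OF ab(2)]) auto
  also have "\<dots> = dist a b * g\<^sup>2" unfolding ab by (simp add: edge_integral_closed_segment[OF ab(2)])
  finally have "diameter e * edge_integral e (grad_sq (piece v (adj_elem \<T> e))) \<le> (dist a b)\<^sup>2 * g\<^sup>2"
    using de by (simp add: power2_eq_square mult_left_mono)
  also have "\<dots> \<le> ?D\<^sup>2 * g\<^sup>2" using ab(3) de by (intro mult_right_mono power_mono) auto
  finally show ?thesis using inverse by linarith
qed

lemma sum_bdry_estimates:
  defines "A \<equiv> 2304 * \<kappa>\<^sup>2 / pi"
  defines "X \<equiv> (1 + 3 * \<kappa>)\<^sup>2 * A"
  shows "(\<Sum>e\<in>bdry_edges \<T>. edge_L2sq e (\<lambda>x. Sh M \<T> v e x - v x) / diameter e) \<le> 3 * X * c * grad_L2sq \<T> v"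
    "(\<Sum>e\<in>bdry_edges \<T>. edge_L2sq e (Sh M \<T> v e) / diameter e)
       \<le> 2 * (\<Sum>e\<in>bdry_edges \<T>. edge_L2sq e v / diameter e) + 6 * X * c * grad_L2sq \<T> v"
    "(\<Sum>e\<in>bdry_edges \<T>. edge_L2sq e v / diameter e)
       \<le> 2 * (\<Sum>e\<in>bdry_edges \<T>. edge_L2sq e (Sh M \<T> v e) / diameter e) + 6 * X * c * grad_L2sq \<T> v"
    "(\<Sum>e\<in>bdry_edges \<T>. diameter e * edge_integral e (grad_sq (piece v (adj_elem \<T> e))))
       \<le> 3 * A * grad_L2sq \<T> v"
proof -
  let ?E = "bdry_edges \<T>" and ?I = "\<lambda>e. integral (interior (elem_of_edge \<T> e)) (grad_sq v)"
  have SI: "(\<Sum>e\<in>?E. ?I e) \<le> 3 * grad_L2sq \<T> v" by (rule sum_bdry_elem_integrals_le)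
  have A: "0 \<le> A" and X: "0 \<le> c * X" unfolding A_def X_def using c_nonneg by simp_all
  have cXSI: "(\<Sum>e\<in>?E. c * X * ?I e) \<le> 3 * X * c * grad_L2sq \<T> v"
    using mult_left_mono[OF SI X] by (simp add: sum_distrib_left mult_ac)
  have "(\<Sum>e\<in>?E. edge_L2sq e (\<lambda>x. Sh M \<T> v e x - v x) / diameter e) \<le> (\<Sum>e\<in>?E. c * X * ?I e)"
    using bdry_edge_Sh_estimates(1) unfolding X_def A_def by (intro sum_mono) (simp add: mult.assoc)
  with cXSI show "(\<Sum>e\<in>?E. edge_L2sq e (\<lambda>x. Sh M \<T> v e x - v x) / diameter e) \<le> 3 * X * c * grad_L2sq \<T> v"
    by linarith
  have "(\<Sum>e\<in>?E. edge_L2sq e (Sh M \<T> v e) / diameter e)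
      \<le> (\<Sum>e\<in>?E. 2 * (edge_L2sq e v / diameter e) + 2 * (c * X * ?I e))"
    using bdry_edge_Sh_estimates(2) unfolding X_def A_def by (intro sum_mono) (simp add: mult.assoc)
  also have "\<dots> = 2 * (\<Sum>e\<in>?E. edge_L2sq e v / diameter e) + 2 * (\<Sum>e\<in>?E. c * X * ?I e)"
    by (simp only: sum.distrib sum_distrib_left)
  finally show "(\<Sum>e\<in>?E. edge_L2sq e (Sh M \<T> v e) / diameter e)
      \<le> 2 * (\<Sum>e\<in>?E. edge_L2sq e v / diameter e) + 6 * X * c * grad_L2sq \<T> v"
    using cXSI by linarith
  have "(\<Sum>e\<in>?E. edge_L2sq e v / diameter e)
      \<le> (\<Sum>e\<in>?E. 2 * (edge_L2sq e (Sh M \<T> v e) / diameter e) + 2 * (c * X * ?I e))"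
    using bdry_edge_Sh_estimates(3) unfolding X_def A_def by (intro sum_mono) (simp add: mult.assoc)
  also have "\<dots> = 2 * (\<Sum>e\<in>?E. edge_L2sq e (Sh M \<T> v e) / diameter e) + 2 * (\<Sum>e\<in>?E. c * X * ?I e)"
    by (simp only: sum.distrib sum_distrib_left)
  finally show "(\<Sum>e\<in>?E. edge_L2sq e v / diameter e)
      \<le> 2 * (\<Sum>e\<in>?E. edge_L2sq e (Sh M \<T> v e) / diameter e) + 6 * X * c * grad_L2sq \<T> v"
    using cXSI by linarith
  have "(\<Sum>e\<in>?E. diameter e * edge_integral e (grad_sq (piece v (adj_elem \<T> e)))) \<le> (\<Sum>e\<in>?E. A * ?I e)"
    using bdry_edge_trace_grad_estimate unfolding A_def by (intro sum_mono) simp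
  also have "\<dots> \<le> A * (3 * grad_L2sq \<T> v)"
    using mult_left_mono[OF SI A] by (simp add: sum_distrib_left)
  finally show "(\<Sum>e\<in>?E. diameter e * edge_integral e (grad_sq (piece v (adj_elem \<T> e))))
      \<le> 3 * A * grad_L2sq \<T> v"
    by (simp add: mult_ac)
qed

lemma norm_equivalences:
  defines "A \<equiv> 2304 * \<kappa>\<^sup>2 / pi"
  defines "C \<equiv> 2 + 6 * ((1 + 3 * \<kappa>)\<^sup>2 * A) + 3 * A"
  shows "(\<Sum>e\<in>bdry_edges \<T>. edge_L2sq e (\<lambda>x. Sh M \<T> v e x - v x) / diameter e) \<le> C * c * grad_L2sq \<T> v"
    "(\<Sum>e\<in>bdry_edges \<T>. edge_L2sq e (Sh M \<T> v e) / diameter e) \<le> C * norm_1h_sq \<T> v"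
    "norm_h_sq M \<T> v \<le> C * norm_1h_sq \<T> v"
    "norm_1h_sq \<T> v \<le> C * norm_h_sq M \<T> v"
    "triple_sq M \<T> v \<le> C * norm_h_sq M \<T> v"
    "norm_h_sq M \<T> v \<le> C * triple_sq M \<T> v"
proof -
  let ?G = "grad_L2sq \<T> v" and ?X = "(1 + 3 * \<kappa>)\<^sup>2 * A"
  let ?S = "\<Sum>e\<in>bdry_edges \<T>. edge_L2sq e (Sh M \<T> v e) / diameter e"
  let ?V = "\<Sum>e\<in>bdry_edges \<T>. edge_L2sq e v / diameter e"
  let ?R = "\<Sum>e\<in>bdry_edges \<T>. diameter e * edge_integral e (grad_sq (piece v (adj_elem \<T> e)))"
  note est = sum_bdry_estimates[folded A_def]
  have G: "0 \<le> ?G" by (rule grad_L2sq_nonneg)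
  have S: "0 \<le> ?S" and V: "0 \<le> ?V" and R: "0 \<le> ?R" by (rule sum_bdry_nonneg)+
  have A: "0 \<le> A" and X: "0 \<le> ?X" unfolding A_def by simp_all
  have "c * ?G \<le> ?G" using c_nonneg c_le_1 G by (simp add: mult_left_le_one_le)
  then have "?X * (c * ?G) \<le> ?X * ?G" using X by (rule mult_left_mono)
  then have cXG: "?X * c * ?G \<le> ?X * ?G" by (simp only: mult.assoc)
  have products: "0 \<le> ?X * ?V" "0 \<le> A * ?V" "0 \<le> ?X * ?S" "0 \<le> A * ?S" "0 \<le> ?X * ?G" "0 \<le> A * ?G"
    using X A G S V by simp_all
  have C_sum: "C * (?G + Y) = 2 * ?G + 6 * (?X * ?G) + 3 * (A * ?G) + 2 * Y + 6 * (?X * Y) + 3 * (A * Y)"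
    for Y unfolding C_def by (simp add: algebra_simps)
  show "(\<Sum>e\<in>bdry_edges \<T>. edge_L2sq e (\<lambda>x. Sh M \<T> v e x - v x) / diameter e) \<le> C * c * ?G"
  proof -
    have "3 * ?X * (c * ?G) \<le> C * (c * ?G)"
      using A c_nonneg G unfolding C_def by (intro mult_right_mono) auto
    then show ?thesis using est(1) by (simp add: mult_ac)
  qed
  show "?S \<le> C * norm_1h_sq \<T> v"
    unfolding norm_1h_sq_def C_sum using est(2) cXG G V products by linarith
  show "norm_h_sq M \<T> v \<le> C * norm_1h_sq \<T> v"
    unfolding norm_h_sq_def norm_1h_sq_def C_sum using est(2) cXG G V products by linarith
  show "norm_1h_sq \<T> v \<le> C * norm_h_sq M \<T> v"
    unfolding norm_h_sq_def norm_1h_sq_def C_sum using est(3) cXG G S products by linarith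
  show "triple_sq M \<T> v \<le> C * norm_h_sq M \<T> v"
    unfolding triple_sq_def norm_h_sq_def C_sum using est(4) G S products by linarith
  have "1 \<le> C" unfolding C_def using A by simp
  moreover have "norm_h_sq M \<T> v \<le> triple_sq M \<T> v" "0 \<le> triple_sq M \<T> v"
    unfolding triple_sq_def norm_h_sq_def using G S R by simp_all
  ultimately show "norm_h_sq M \<T> v \<le> C * triple_sq M \<T> v"
    using mult_right_mono[of 1 C "triple_sq M \<T> v"] by linarith
qed

end

lemma fe_boundary_map_interior_mesh:
  assumes "triangulation \<S> S" "shape_reg_quasi_unif \<kappa> h \<S>" "1 \<le> \<kappa>" "0 \<le> c" "c \<le> 1"
    and "\<forall>e\<in>bdry_edges (interior_mesh \<S> \<Omega>). \<forall>x\<in>e. norm (M x - x) \<le> c * diameter e"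
    and "continuous_on (frontier (mesh_domain (interior_mesh \<S> \<Omega>))) M"
    and "v \<in> Vh (interior_mesh \<S> \<Omega>)"
  shows "fe_boundary_map (interior_mesh \<S> \<Omega>) v \<kappa> c M"
proof -
  have sub: "interior_mesh \<S> \<Omega> \<subseteq> \<S>" unfolding interior_mesh_def by blast
  show ?thesis
  proof unfold_locales
    show "finite (interior_mesh \<S> \<Omega>)"
      using assms(1) sub unfolding triangulation_def by (blast intro: finite_subset)
    show "\<And>T. T \<in> interior_mesh \<S> \<Omega> \<Longrightarrow> is_triangle T"
      using assms(1) sub unfolding triangulation_def by blast
    show "\<And>T T'. T \<in> interior_mesh \<S> \<Omega> \<Longrightarrow> T' \<in> interior_mesh \<S> \<Omega> \<Longrightarrow> T \<noteq> T' \<Longrightarrow> interior T \<inter> interior T' = {}"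
      using triangulation_interiors_disjoint[OF assms(1)] sub by blast
    show "\<And>T. T \<in> interior_mesh \<S> \<Omega> \<Longrightarrow> \<exists>x. ball x (diameter T / \<kappa>) \<subseteq> T"
      using assms(2) sub unfolding shape_reg_quasi_unif_def by blast
  qed (use assms in auto)
qed

theorem lemma4p1:
  fixes \<Omega> :: "pt set" and \<kappa> :: real
  assumes "smooth_bounded_domain \<Omega>" and "1 \<le> \<kappa>"
  shows "\<exists>C>0. \<exists>c0>0. \<forall>S \<S> h M c\<^sub>\<delta> v.
     triangulation \<S> S \<and> \<Omega> \<subseteq> S \<and> shape_reg_quasi_unif \<kappa> h \<S> \<and>
     (\<forall>x\<in>frontier (mesh_domain (interior_mesh \<S> \<Omega>)). M x \<in> frontier \<Omega>) \<and>
     continuous_on (frontier (mesh_domain (interior_mesh \<S> \<Omega>))) M \<and>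
     0 \<le> c\<^sub>\<delta> \<and> c\<^sub>\<delta> < 1 \<and> c\<^sub>\<delta> \<le> c0 \<and>
     (\<forall>e\<in>bdry_edges (interior_mesh \<S> \<Omega>). \<forall>x\<in>e. norm (M x - x) \<le> c\<^sub>\<delta> * diameter e) \<and>
     v \<in> Vh (interior_mesh \<S> \<Omega>)
     \<longrightarrow>
     (let \<T> = interior_mesh \<S> \<Omega> in
       (\<Sum>e\<in>bdry_edges \<T>. edge_L2sq e (\<lambda>x. Sh M \<T> v e x - v x) / diameter e)
          \<le> C * c\<^sub>\<delta> * grad_L2sq \<T> v \<and>
       (\<Sum>e\<in>bdry_edges \<T>. edge_L2sq e (Sh M \<T> v e) / diameter e) \<le> C * norm_1h_sq \<T> v \<and>
       norm_h_sq M \<T> v \<le> C * norm_1h_sq \<T> v \<and>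
       norm_1h_sq \<T> v \<le> C * norm_h_sq M \<T> v \<and>
       triple_sq M \<T> v \<le> C * norm_h_sq M \<T> v \<and>
       norm_h_sq M \<T> v \<le> C * triple_sq M \<T> v)"
proof -
  define C where "C = 2 + 6 * ((1 + 3 * \<kappa>)\<^sup>2 * (2304 * \<kappa>\<^sup>2 / pi)) + 3 * (2304 * \<kappa>\<^sup>2 / pi)"
  have C: "0 < C" unfolding C_def by (simp add: add_pos_nonneg)
  show ?thesis
    apply (rule exI[of _ C], rule conjI[OF C], rule exI[of _ "1::real"], rule conjI[OF zero_less_one])
    apply (intro allI impI, elim conjE)
    subgoal premises H for S \<S> h M c v
      using fe_boundary_map.norm_equivalences[OF fe_boundary_map_interior_mesh[OF H(1,3) assms(2) H(6,8,9,5,10)]]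
      unfolding Let_def C_def by blast
    done
qed

end
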